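(* For the biased random transpositions walk with parameter $0<a\le 1$, and every $\varepsilon\in(0,1)$, setting $t_N=\lfloor (1-\varepsilon)\frac{1}{2a}N\log N\rfloor$, $$\lim_{N\to\infty}\ \frac12\sum_{\sigma\in S_N}\Big|P^{t_N}(\sigma)-\frac{1}{N!}\Big| = 1 .$$ More precisely, with $K=(N)^{\varepsilon/2}$ and $A_K$ the set of arrangements in which at least $K$ of the $a$-cards are in their original positions, $P^{t_N}(A_K)\to 1$ while $U(A_K)\to 0$, where $U$ is the uniform distribution on $S_N$.
   Context: Biased random transpositions walk: there are $N=2n$ cards. A fixed set of $n$ of them are called $a$-cards and have weight $p(c)=a$; the other $n$ are $b$-cards and have weight $p(c)=b$, where $0<a\le 1$ and $b=2-a$. At each step $t=1,2,\dots$ two cards $R_t$ and $L_t$ are chosen independently, each equal to a given card $c$ with probability $p(c)/N$, and the positions of $R_t$ and $L_t$ are exchanged (nothing happens if $R_t=L_t$). Starting from the identity arrangement, $P^t$ denotes the distribution on $S_N$ of the arrangement after $t$ steps. *)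

theory Defs
  imports "HOL-Probability.Probability" "HOL-Combinatorics.Combinatorics"
begin

text \<open>Cards are 0..<2n (N = 2n). Cards 0..<n are the a-cards, cards n..<2n the b-cards.
  An arrangement is a permutation sigma of {0..<2n}; sigma c is the position of card c.\<close>

definition weight :: "nat \<Rightarrow> real \<Rightarrow> nat \<Rightarrow> real" where
  "weight n a c = (if c < n then a else 2 - a)"

definition card_pmf :: "nat \<Rightarrow> real \<Rightarrow> nat pmf" where
  "card_pmf n a = embed_pmf (\<lambda>c. if c < 2 * n then weight n a c / real (2 * n) else 0)"

definition step_pmf :: "nat \<Rightarrow> real \<Rightarrow> (nat \<Rightarrow> nat) \<Rightarrow> (nat \<Rightarrow> nat) pmf" where
  "step_pmf n a \<sigma> =
     bind_pmf (card_pmf n a) (\<lambda>R. map_pmf (\<lambda>L. \<sigma> \<circ> Transposition.transpose R L) (card_pmf n a))"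

primrec walk :: "nat \<Rightarrow> real \<Rightarrow> nat \<Rightarrow> (nat \<Rightarrow> nat) pmf" where
  "walk n a 0 = return_pmf id"
| "walk n a (Suc t) = bind_pmf (walk n a t) (step_pmf n a)"

definition perms :: "nat \<Rightarrow> (nat \<Rightarrow> nat) set" where
  "perms N = {\<sigma>. \<sigma> permutes {0..<N}}"

definition tv_to_uniform :: "nat \<Rightarrow> real \<Rightarrow> nat \<Rightarrow> real" where
  "tv_to_uniform n a t =
     (1/2) * (\<Sum>\<sigma>\<in>perms (2*n). \<bar>pmf (walk n a t) \<sigma> - 1 / fact (2*n)\<bar>)"

definition tN :: "real \<Rightarrow> real \<Rightarrow> nat \<Rightarrow> nat" where
  "tN a \<epsilon> N = nat \<lfloor>(1 - \<epsilon>) * (1 / (2 * a)) * real N * ln (real N)\<rfloor>"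

definition A_set :: "nat \<Rightarrow> real \<Rightarrow> (nat \<Rightarrow> nat) set" where
  "A_set n K = {\<sigma>. real (card {c\<in>{0..<n}. \<sigma> c = c}) \<ge> K}"

end

theory Submission
  imports Defs "HOL-Real_Asymp.Real_Asymp"
begin

text \<open>A card that has never been picked as R or L is still in its original position. A step
  leaves a fixed set S of cards untouched with probability q(S)^2, where q(S) is the probability
  that one draw avoids S. Hence after t steps the number of untouched a-cards has mean
  n (1 - a/N)^(2t) and, since two distinct a-cards are avoided by a draw with probability
  1 - 2a/N <= (1 - a/N)^2, variance at most its mean. At time t_N the mean is of order N^eps, so by
  Chebyshev the walk fixes at least K = N^(eps/2) a-cards with probability tending to 1. A uniform
  permutation fixes on average n/N = 1/2 a-cards, so by Markov it lies in A_K with probability at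
  most 1/(2K).\<close>

lemma (in prob_space) prob_less_le_variance:
  fixes X :: "'a \<Rightarrow> real"
  assumes [measurable]: "random_variable borel X"
    and "integrable M (\<lambda>x. X x ^ 2)" and "K < expectation X"
  shows "prob {x\<in>space M. X x < K} \<le> variance X / (expectation X - K)\<^sup>2"
proof -
  have "prob {x\<in>space M. X x < K} \<le> prob {x\<in>space M. \<bar>X x - expectation X\<bar> \<ge> expectation X - K}"
    by (intro finite_measure_mono) auto
  also have "\<dots> \<le> variance X / (expectation X - K)\<^sup>2"
    using assms by (intro Chebyshev_inequality) auto
  finally show ?thesis .
qed

lemma exp_le_one_minus_power:
  fixes x :: real
  assumes "0 \<le> x" "x \<le> 1/2"
  shows "exp (- real m * (x + 2 * x\<^sup>2)) \<le> (1 - x) ^ m"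
proof -
  have "real m * (- x - 2 * x\<^sup>2) \<le> real m * ln (1 - x)"
    using ln_one_minus_pos_lower_bound[OF assms] by (rule mult_left_mono) simp
  also have "\<dots> = ln ((1 - x) ^ m)"
    using assms by (simp add: ln_realpow)
  finally have "exp (- real m * (x + 2 * x\<^sup>2)) \<le> exp (ln ((1 - x) ^ m))"
    by (simp add: algebra_simps)
  then show ?thesis
    using assms by simp
qed

lemma prob_diff_le_total_variation:
  assumes "finite P" "set_pmf M \<subseteq> P" "set_pmf M' \<subseteq> P"
  shows "measure_pmf.prob M A - measure_pmf.prob M' A \<le> (1/2) * (\<Sum>x\<in>P. \<bar>pmf M x - pmf M' x\<bar>)"
proof -
  have prob: "measure_pmf.prob p B = (\<Sum>x\<in>P \<inter> B. pmf p x)" if "set_pmf p \<subseteq> P" for p B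
  proof -
    have "measure_pmf.prob p B = measure_pmf.prob p (P \<inter> B)"
      using that measure_Int_set_pmf[of p B] measure_Int_set_pmf[of p "P \<inter> B"]
      by (metis inf.absorb_iff2 inf_assoc inf_commute)
    then show ?thesis using assms(1) by (simp add: measure_measure_pmf_finite)
  qed
  have "measure_pmf.prob M A - measure_pmf.prob M' A = (\<Sum>x\<in>P \<inter> A. pmf M x - pmf M' x)"
    using assms by (simp add: prob sum_subtractf)
  moreover have "measure_pmf.prob M A - measure_pmf.prob M' A = (\<Sum>x\<in>P - A. pmf M' x - pmf M x)"
  proof -
    have "measure_pmf.prob p (- A) = 1 - measure_pmf.prob p A" for p
      using measure_pmf.prob_compl[of A p] by (simp add: Compl_eq_Diff_UNIV)
    then show ?thesis
      using assms prob[of M "- A"] prob[of M' "- A"] by (simp add: sum_subtractf Diff_eq)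
  qed
  moreover have "(\<Sum>x\<in>P \<inter> A. pmf M x - pmf M' x) + (\<Sum>x\<in>P - A. pmf M' x - pmf M x)
      \<le> (\<Sum>x\<in>P \<inter> A. \<bar>pmf M x - pmf M' x\<bar>) + (\<Sum>x\<in>P - A. \<bar>pmf M x - pmf M' x\<bar>)"
    by (intro add_mono sum_mono) auto
  ultimately show ?thesis
    using sum.Int_Diff[OF assms(1), of "\<lambda>x. \<bar>pmf M x - pmf M' x\<bar>" A] by simp
qed

lemma total_variation_le_one:
  assumes "finite P"
  shows "(1/2) * (\<Sum>x\<in>P. \<bar>pmf M x - pmf M' x\<bar>) \<le> 1"
proof -
  have "(\<Sum>x\<in>P. \<bar>pmf M x - pmf M' x\<bar>) \<le> (\<Sum>x\<in>P. pmf M x + pmf M' x)"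
    by (intro sum_mono) (simp add: abs_le_iff add_increasing)
  also have "\<dots> = measure_pmf.prob M P + measure_pmf.prob M' P"
    using assms by (simp add: sum.distrib measure_measure_pmf_finite)
  also have "\<dots> \<le> 2"
    using add_mono[OF measure_pmf.prob_le_1 measure_pmf.prob_le_1] by simp
  finally show ?thesis by simp
qed


subsection \<open>The walk together with the set of touched cards\<close>

definition step_touched ::
    "nat \<Rightarrow> real \<Rightarrow> (nat \<Rightarrow> nat) \<times> nat set \<Rightarrow> ((nat \<Rightarrow> nat) \<times> nat set) pmf" where
  "step_touched n a x = bind_pmf (card_pmf n a) (\<lambda>R. map_pmf
     (\<lambda>L. (fst x \<circ> Transposition.transpose R L, insert R (insert L (snd x)))) (card_pmf n a))"

primrec walk_touched :: "nat \<Rightarrow> real \<Rightarrow> nat \<Rightarrow> ((nat \<Rightarrow> nat) \<times> nat set) pmf" where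
  "walk_touched n a 0 = return_pmf (id, {})"
| "walk_touched n a (Suc t) = bind_pmf (walk_touched n a t) (step_touched n a)"

definition untouched :: "nat set \<Rightarrow> ((nat \<Rightarrow> nat) \<times> nat set) set" where
  "untouched S = {x. snd x \<inter> S = {}}"

lemma map_fst_walk_touched: "map_pmf fst (walk_touched n a t) = walk n a t"
proof (induction t)
  case 0 then show ?case by simp
next
  case (Suc t)
  have "map_pmf fst (walk_touched n a (Suc t))
      = bind_pmf (walk_touched n a t) (\<lambda>x. step_pmf n a (fst x))"
    by (simp add: map_bind_pmf step_touched_def step_pmf_def map_pmf_comp o_def)
  also have "\<dots> = bind_pmf (map_pmf fst (walk_touched n a t)) (step_pmf n a)"
    by (simp add: bind_map_pmf)
  finally show ?case using Suc by simp
qed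

lemma walk_touched_fixes_untouched:
  "x \<in> set_pmf (walk_touched n a t) \<Longrightarrow> c \<notin> snd x \<Longrightarrow> fst x c = c"
  by (induction t arbitrary: x) (auto simp: step_touched_def)

lemma emeasure_step_touched_untouched:
  "emeasure (step_touched n a x) (untouched S)
     = ennreal (measure_pmf.prob (card_pmf n a) (- S) ^ 2) * indicator (untouched S) x"
proof -
  let ?q = "measure_pmf.prob (card_pmf n a) (- S)"
  have "emeasure (step_touched n a x) (untouched S)
      = (\<integral>\<^sup>+R. emeasure (card_pmf n a) {L. insert R (insert L (snd x)) \<inter> S = {}} \<partial>card_pmf n a)"
    by (simp add: step_touched_def untouched_def vimage_def)
  also have "\<dots> = (\<integral>\<^sup>+R. indicator (- S) R * (ennreal ?q * indicator (untouched S) x) \<partial>card_pmf n a)"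
  proof (rule nn_integral_cong)
    fix R
    have "{L. insert R (insert L (snd x)) \<inter> S = {}} = (if R \<notin> S \<and> snd x \<inter> S = {} then - S else {})"
      by auto
    then show "emeasure (card_pmf n a) {L. insert R (insert L (snd x)) \<inter> S = {}}
       = indicator (- S) R * (ennreal ?q * indicator (untouched S) x)"
      by (simp add: measure_pmf.emeasure_eq_measure indicator_def untouched_def)
  qed
  also have "\<dots> = ennreal ?q * (ennreal ?q * indicator (untouched S) x)"
    by (subst nn_integral_multc) (simp_all add: measure_pmf.emeasure_eq_measure)
  also have "\<dots> = ennreal (?q ^ 2) * indicator (untouched S) x"
    by (simp add: power2_eq_square ennreal_mult' mult.assoc)
  finally show ?thesis .
qed

lemma prob_walk_touched_untouched:
  "measure_pmf.prob (walk_touched n a t) (untouched S)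
     = measure_pmf.prob (card_pmf n a) (- S) ^ (2*t)"
proof -
  let ?q = "measure_pmf.prob (card_pmf n a) (- S)"
  have "emeasure (walk_touched n a t) (untouched S) = ennreal (?q ^ (2*t))"
  proof (induction t)
    case 0 then show ?case by (simp add: untouched_def)
  next
    case (Suc t)
    have "emeasure (walk_touched n a (Suc t)) (untouched S)
        = (\<integral>\<^sup>+x. ennreal (?q ^ 2) * indicator (untouched S) x \<partial>walk_touched n a t)"
      by (simp add: emeasure_step_touched_untouched)
    also have "\<dots> = ennreal (?q ^ 2) * ennreal (?q ^ (2*t))"
      using Suc by (subst nn_integral_cmult_indicator) auto
    also have "\<dots> = ennreal (?q ^ (2 * Suc t))"
      by (simp add: ennreal_mult[symmetric] power_add[symmetric])
    finally show ?case .
  qed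
  then show ?thesis by (simp add: measure_pmf.emeasure_eq_measure)
qed

definition untouched_count :: "nat \<Rightarrow> (nat \<Rightarrow> nat) \<times> nat set \<Rightarrow> real" where
  "untouched_count n x = real (card ({..<n} - snd x))"

lemma untouched_count_eq_sum:
  "untouched_count n x = (\<Sum>c<n. indicator (untouched {c}) x)"
proof -
  have "indicator (untouched {c}) x = (of_bool (c \<notin> snd x) :: real)" for c
    by (simp add: indicator_def untouched_def)
  then show ?thesis by (simp add: untouched_count_def Diff_eq Compl_eq)
qed

lemma untouched_count_sq_eq_sum:
  "(untouched_count n x)\<^sup>2 = (\<Sum>c<n. \<Sum>d<n. indicator (untouched {c,d}) x)"
proof -
  have "indicator (untouched {c}) x * indicator (untouched {d}) x
      = (indicator (untouched {c,d}) x :: real)" for c d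
    by (simp add: indicator_def untouched_def)
  then show ?thesis
    unfolding untouched_count_eq_sum power2_eq_square sum_product by simp
qed

lemma prob_walk_A_set_ge:
  "1 - measure_pmf.prob (walk_touched n a t) {x. untouched_count n x < K}
     \<le> measure_pmf.prob (walk n a t) (A_set n K)"
proof -
  let ?M = "walk_touched n a t"
  have "measure_pmf.prob ?M (- (fst -` A_set n K))
      = measure_pmf.prob ?M (- (fst -` A_set n K) \<inter> set_pmf ?M)"
    by (simp add: measure_Int_set_pmf)
  also have "\<dots> \<le> measure_pmf.prob ?M {x. untouched_count n x < K}"
  proof (intro measure_pmf.finite_measure_mono subsetI)
    fix x assume x: "x \<in> - (fst -` A_set n K) \<inter> set_pmf ?M"
    have "card ({..<n} - snd x) \<le> card {c\<in>{0..<n}. fst x c = c}"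
      using walk_touched_fixes_untouched[of x] x by (intro card_mono) auto
    then show "x \<in> {x. untouched_count n x < K}"
      using x by (auto simp: A_set_def untouched_count_def)
  qed simp
  finally show ?thesis
    using measure_pmf.prob_compl[of "fst -` A_set n K" ?M]
    by (simp add: map_fst_walk_touched[symmetric] Compl_eq_Diff_UNIV)
qed

context
  fixes n :: nat and a :: real
  assumes a_nonneg: "0 \<le> a" and a_le_2: "a \<le> 2" and n_pos: "1 \<le> n"
begin

lemma pmf_card_pmf:
  "pmf (card_pmf n a) c = (if c < 2 * n then weight n a c / real (2 * n) else 0)"
  unfolding card_pmf_def
proof (rule pmf_embed_pmf)
  show "\<And>x. 0 \<le> (if x < 2 * n then weight n a x / real (2 * n) else 0)"
    using a_nonneg a_le_2 n_pos by (auto simp: weight_def)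
  have "(\<Sum>x<2*n. weight n a x) = (\<Sum>x<n. weight n a x) + (\<Sum>x=n..<2*n. weight n a x)"
    by (metis lessThan_atLeast0 mult_2 sum.atLeastLessThan_concat le_add1 zero_le)
  also have "\<dots> = n * a + n * (2 - a)" by (simp add: weight_def)
  finally have total: "(\<Sum>x<2*n. weight n a x / real (2 * n)) = 1"
    using a_nonneg a_le_2 n_pos by (simp add: sum_divide_distrib[symmetric] field_simps)
  have "(\<integral>\<^sup>+x. ennreal (if x < 2 * n then weight n a x / real (2 * n) else 0) \<partial>count_space UNIV)
      = (\<integral>\<^sup>+x. ennreal (if x < 2 * n then weight n a x / real (2 * n) else 0) \<partial>count_space {..<2*n})"
    by (subst nn_integral_count_space_indicator) (auto intro!: nn_integral_cong simp: indicator_def)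
  also have "\<dots> = ennreal (\<Sum>x<2*n. weight n a x / real (2 * n))"
    using a_nonneg a_le_2 n_pos by (subst nn_integral_count_space_finite) (auto simp: weight_def intro!: sum_ennreal)
  finally show "(\<integral>\<^sup>+x. ennreal (if x < 2 * n then weight n a x / real (2 * n) else 0) \<partial>count_space UNIV) = 1"
    unfolding total by simp
qed

lemma set_pmf_card_pmf: "set_pmf (card_pmf n a) \<subseteq> {..<2*n}"
  using pmf_card_pmf by (auto simp: set_pmf_eq split: if_splits)

lemma prob_card_pmf_not_in:
  assumes "S \<subseteq> {..<n}"
  shows "measure_pmf.prob (card_pmf n a) (- S) = 1 - real (card S) * a / (2 * n)"
proof -
  have "finite S" using assms finite_subset by blast
  then have "measure_pmf.prob (card_pmf n a) S = (\<Sum>c\<in>S. pmf (card_pmf n a) c)"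
    by (simp add: measure_measure_pmf_finite)
  also have "\<dots> = (\<Sum>c\<in>S. a / (2*n))"
    using assms n_pos by (intro sum.cong) (auto simp: pmf_card_pmf weight_def)
  finally have "measure_pmf.prob (card_pmf n a) S = real (card S) * a / (2 * n)" by simp
  then show ?thesis
    using measure_pmf.prob_compl[of S "card_pmf n a"] by (simp add: Compl_eq_Diff_UNIV)
qed

lemma walk_permutes: "\<sigma> \<in> set_pmf (walk n a t) \<Longrightarrow> \<sigma> permutes {0..<2*n}"
proof (induction t arbitrary: \<sigma>)
  case 0 then show ?case using permutes_id[of "{0..<2*n}"] by (simp add: id_def)
next
  case (Suc t)
  then obtain \<tau> R L where "\<tau> \<in> set_pmf (walk n a t)" "R \<in> set_pmf (card_pmf n a)"
    "L \<in> set_pmf (card_pmf n a)" "\<sigma> = \<tau> \<circ> Transposition.transpose R L"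
    by (auto simp: step_pmf_def)
  moreover have "R < 2*n" "L < 2*n" using calculation set_pmf_card_pmf by auto
  ultimately show ?case using Suc.IH
    by (metis atLeastLessThan_iff le0 permutes_compose permutes_swap_id)
qed

lemma finite_set_pmf_walk_touched: "finite (set_pmf (walk_touched n a t))"
proof (induction t)
  case 0 then show ?case by simp
next
  case (Suc t)
  have "finite (set_pmf (card_pmf n a))"
    using set_pmf_card_pmf finite_subset by blast
  with Suc show ?case by (simp add: step_touched_def)
qed

lemma integrable_walk_touched: "integrable (walk_touched n a t) (f :: _ \<Rightarrow> real)"
  by (rule integrable_measure_pmf_finite[OF finite_set_pmf_walk_touched])

lemma prob_walk_touched_untouched_a_cards:
  assumes "S \<subseteq> {..<n}"
  shows "measure_pmf.prob (walk_touched n a t) (untouched S)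
           = (1 - real (card S) * a / (2 * n)) ^ (2*t)"
  using prob_walk_touched_untouched[of n a t S]
    prob_card_pmf_not_in[OF assms]
  by simp

lemma expectation_untouched_count:
  "measure_pmf.expectation (walk_touched n a t) (untouched_count n)
     = n * (1 - a / (2*n)) ^ (2*t)"
  unfolding untouched_count_eq_sum
  by (subst Bochner_Integration.integral_sum[OF integrable_walk_touched])
     (simp add: prob_walk_touched_untouched_a_cards)

lemma expectation_untouched_count_sq_le:
  "measure_pmf.expectation (walk_touched n a t) (\<lambda>x. (untouched_count n x)\<^sup>2)
     \<le> n * (1 - a / (2*n)) ^ (2*t) + (n * (1 - a / (2*n)) ^ (2*t))\<^sup>2"
proof -
  let ?q = "1 - a / (2*n)"
  have "measure_pmf.expectation (walk_touched n a t) (\<lambda>x. (untouched_count n x)\<^sup>2)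
     = (\<Sum>c<n. \<Sum>d<n. measure_pmf.prob (walk_touched n a t) (untouched {c,d}))"
    unfolding untouched_count_sq_eq_sum
    by (simp add: Bochner_Integration.integral_sum integrable_walk_touched)
  also have "\<dots> \<le> (\<Sum>c<n. \<Sum>d<n. (if c = d then ?q ^ (2*t) else 0) + ?q ^ (4*t))"
  proof (intro sum_mono)
    fix c d assume cd: "c \<in> {..<n}" "d \<in> {..<n}"
    show "measure_pmf.prob (walk_touched n a t) (untouched {c,d})
        \<le> (if c = d then ?q ^ (2*t) else 0) + ?q ^ (4*t)"
    proof (cases "c = d")
      case True
      then show ?thesis
        using cd a_le_2 n_pos by (simp add: prob_walk_touched_untouched_a_cards field_simps)
    next
      case False
      then have "2 \<le> n" using cd by auto
      then have "(1 - 2 * a / (2*n)) ^ (2*t) \<le> (?q\<^sup>2) ^ (2*t)"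
        using a_nonneg a_le_2 by (intro power_mono) (auto simp: power2_eq_square field_simps)
      then show ?thesis
        using False cd by (simp add: prob_walk_touched_untouched_a_cards power_mult[symmetric] mult.commute)
    qed
  qed
  also have "\<dots> = n * ?q ^ (2*t) + (n * ?q ^ (2*t))\<^sup>2"
    by (simp add: sum.distrib power2_eq_square power_add[symmetric] mult_2 algebra_simps)
  finally show ?thesis .
qed

lemma variance_untouched_count_le:
  "measure_pmf.variance (walk_touched n a t) (untouched_count n)
     \<le> n * (1 - a / (2*n)) ^ (2*t)"
  using expectation_untouched_count_sq_le[of t]
  by (subst measure_pmf.variance_eq) (simp_all add: integrable_walk_touched expectation_untouched_count)

lemma prob_untouched_count_less:
  assumes "2 * K \<le> n * (1 - a / (2*n)) ^ (2*t)" "0 < K"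
  shows "measure_pmf.prob (walk_touched n a t) {x. untouched_count n x < K}
           \<le> 4 / (n * (1 - a / (2*n)) ^ (2*t))"
proof -
  define \<mu> where "\<mu> = n * (1 - a / (2*n)) ^ (2*t)"
  have K: "0 < K" "2 * K \<le> \<mu>" using assms by (auto simp: \<mu>_def)
  have "measure_pmf.prob (walk_touched n a t) {x. untouched_count n x < K}
      \<le> measure_pmf.variance (walk_touched n a t) (untouched_count n) / (\<mu> - K)\<^sup>2"
    using measure_pmf.prob_less_le_variance[where M = "walk_touched n a t" and X = "untouched_count n"]
      assms K
    by (simp add: integrable_walk_touched expectation_untouched_count \<mu>_def)
  also have "\<dots> \<le> \<mu> / (\<mu> - K)\<^sup>2"
    using variance_untouched_count_le by (intro divide_right_mono) (auto simp: \<mu>_def)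
  also have "\<dots> \<le> \<mu> / (\<mu> / 2)\<^sup>2"
    using K by (intro divide_left_mono power_mono mult_pos_pos) auto
  also have "\<dots> = 4 / \<mu>"
    using K by (simp add: power2_eq_square field_simps)
  finally show ?thesis by (simp add: \<mu>_def)
qed

end


subsection \<open>The walk at time t_N\<close>

lemma tN_exponent_le:
  fixes a \<epsilon> :: real and n :: nat
  assumes a: "0 < a" "a \<le> 1" and \<epsilon>: "0 < \<epsilon>" "\<epsilon> < 1" and n: "1 \<le> n"
  defines "x \<equiv> a / (2*n)"
  shows "real (2 * tN a \<epsilon> (2*n)) * (x + 2 * x\<^sup>2) \<le> (1 - \<epsilon>) * ln (2*n) + 2"
proof -
  define N where "N = real (2*n)"
  define T where "T = (1 - \<epsilon>) * (1 / (2 * a)) * N * ln N"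
  define m where "m = 2 * tN a \<epsilon> (2*n)"
  have N: "2 \<le> N" using n by (simp add: N_def)
  have lnN: "0 \<le> ln N" "ln N \<le> N" using N ln_le_minus_one[of N] by auto
  have x: "0 < x" "x \<le> 1/2" using a n by (auto simp: x_def field_simps)
  have "0 \<le> T" using a \<epsilon> N lnN by (simp add: T_def)
  then have "real (tN a \<epsilon> (2*n)) = of_int \<lfloor>T\<rfloor>"
    by (simp add: tN_def T_def N_def)
  then have "real m * x \<le> 2 * T * x"
    using x by (simp add: m_def mult_right_mono)
  also have "2 * T * x = (1 - \<epsilon>) * ln N"
    using a n by (simp add: T_def x_def N_def field_simps)
  finally have mx: "real m * x \<le> (1 - \<epsilon>) * ln N" .
  have "2 * x * ln N = a * (ln N / n)"
    using n by (simp add: x_def N_def field_simps)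
  also have "\<dots> \<le> 1 * 2"
    using a n lnN by (intro mult_mono) (auto simp: N_def field_simps)
  finally have "(1 - \<epsilon>) * (x * ln N) \<le> 1 * 1"
    using \<epsilon> x lnN by (intro mult_mono) auto
  then have "(1 - \<epsilon>) * ln N * (2 * x) \<le> 2"
    by (simp add: algebra_simps)
  then show ?thesis
    using x mx mult_right_mono[OF mx, of "2 * x"]
    by (simp add: m_def N_def power2_eq_square algebra_simps)
qed

lemma untouched_mean_at_tN_ge:
  fixes a \<epsilon> :: real and n :: nat
  assumes a: "0 < a" "a \<le> 1" and \<epsilon>: "0 < \<epsilon>" "\<epsilon> < 1" and n: "1 \<le> n"
  shows "real (2*n) powr \<epsilon> / (2 * exp 2) \<le> real n * (1 - a/(2*n)) ^ (2 * tN a \<epsilon> (2*n))"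
proof -
  define N where "N = real (2*n)"
  define x where "x = a / (2*n)"
  have N: "2 \<le> N" using n by (simp add: N_def)
  have x: "0 \<le> x" "x \<le> 1/2" using a n by (auto simp: x_def field_simps)
  have "exp (- (1 - \<epsilon>) * ln N - 2) \<le> exp (- real (2 * tN a \<epsilon> (2*n)) * (x + 2 * x\<^sup>2))"
    using tN_exponent_le[OF a \<epsilon> n] by (simp add: N_def x_def algebra_simps)
  also have "\<dots> \<le> (1 - x) ^ (2 * tN a \<epsilon> (2*n))"
    using exp_le_one_minus_power x by blast
  finally have "real n * exp (- (1 - \<epsilon>) * ln N - 2) \<le> real n * (1 - x) ^ (2 * tN a \<epsilon> (2*n))"
    by (simp add: mult_left_mono)
  moreover have "real n * exp (- (1 - \<epsilon>) * ln N - 2) = N powr \<epsilon> / (2 * exp 2)"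
  proof -
    have "- (1 - \<epsilon>) * ln N - 2 = \<epsilon> * ln N - ln N - 2" by (simp add: algebra_simps)
    then have "exp (- (1 - \<epsilon>) * ln N - 2) = N powr \<epsilon> / N / exp 2"
      using N by (simp add: exp_diff powr_def)
    then show ?thesis using n by (simp add: N_def)
  qed
  ultimately show ?thesis
    by (simp add: N_def x_def)
qed

lemma prob_walk_A_set_at_tN_ge:
  fixes a \<epsilon> :: real and n :: nat
  assumes a: "0 < a" "a \<le> 1" and \<epsilon>: "0 < \<epsilon>" "\<epsilon> < 1" and n: "1 \<le> n"
    and large: "4 * exp 2 \<le> real (2*n) powr (\<epsilon>/2)"
  shows "1 - 8 * exp 2 * real (2*n) powr (-\<epsilon>)
           \<le> measure_pmf.prob (walk n a (tN a \<epsilon> (2*n))) (A_set n (real (2*n) powr (\<epsilon>/2)))"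
proof -
  define K where "K = real (2*n) powr (\<epsilon>/2)"
  define L where "L = real (2*n) powr \<epsilon> / (2 * exp 2)"
  define \<mu> where "\<mu> = n * (1 - a/(2*n)) ^ (2 * tN a \<epsilon> (2*n))"
  have K: "4 * exp 2 \<le> K" "0 < K"
    using large n by (auto simp: K_def)
  have "real (2*n) powr \<epsilon> = K * K"
    unfolding K_def by (simp flip: powr_add)
  then have "L * (2 * exp 2) = K * K"
    unfolding L_def by simp
  then have "2 * K * (2 * exp 2) \<le> L * (2 * exp 2)"
    using K mult_left_mono[OF K(1), of K] by (simp add: mult_ac)
  then have "2 * K \<le> L"
    by (rule mult_right_le_imp_le) simp
  moreover have "L \<le> \<mu>"
    unfolding L_def \<mu>_def using untouched_mean_at_tN_ge a \<epsilon> n by simp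
  ultimately have "measure_pmf.prob (walk_touched n a (tN a \<epsilon> (2*n))) {x. untouched_count n x < K}
      \<le> 4 / \<mu>"
    using prob_untouched_count_less[where n = n and a = a and K = K] a n K by (simp add: \<mu>_def)
  also have "\<dots> \<le> 4 / L"
    using \<open>2 * K \<le> L\<close> \<open>L \<le> \<mu>\<close> K by (intro divide_left_mono) auto
  also have "4 / L = 8 * exp 2 * real (2*n) powr (-\<epsilon>)"
    by (simp add: L_def powr_minus field_simps)
  finally show ?thesis
    using prob_walk_A_set_ge[of n a "tN a \<epsilon> (2*n)" K] unfolding K_def by linarith
qed

lemma prob_walk_A_set_tendsto:
  fixes a \<epsilon> :: real
  assumes a: "0 < a" "a \<le> 1" and \<epsilon>: "0 < \<epsilon>" "\<epsilon> < 1"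
  shows "(\<lambda>n. measure_pmf.prob (walk n a (tN a \<epsilon> (2*n))) (A_set n (real (2*n) powr (\<epsilon>/2))))
           \<longlonglongrightarrow> 1"
proof (rule tendsto_sandwich)
  have "filterlim (\<lambda>n::nat. real (2*n) powr (\<epsilon>/2)) at_top sequentially"
    using \<epsilon> by real_asymp
  then have "eventually (\<lambda>n::nat. 1 \<le> n \<and> 4 * exp 2 \<le> real (2*n) powr (\<epsilon>/2)) sequentially"
    by (simp add: filterlim_at_top eventually_conj_iff eventually_ge_at_top)
  then show "eventually (\<lambda>n. 1 - 8 * exp 2 * real (2*n) powr (-\<epsilon>)
      \<le> measure_pmf.prob (walk n a (tN a \<epsilon> (2*n))) (A_set n (real (2*n) powr (\<epsilon>/2)))) sequentially"
    by eventually_elim (use prob_walk_A_set_at_tN_ge a \<epsilon> in blast)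
  show "(\<lambda>n. 1 - 8 * exp 2 * real (2*n) powr (-\<epsilon>)) \<longlonglongrightarrow> 1"
    using \<epsilon> by real_asymp
qed auto


subsection \<open>Fixed a-cards of a uniform permutation\<close>

lemma card_perms: "card (perms N) = fact N"
  unfolding perms_def by (rule card_permutations) auto

lemma finite_perms: "finite (perms N)"
  unfolding perms_def by (rule finite_permutations) auto

lemma perms_ne_empty: "perms N \<noteq> {}"
  unfolding perms_def using permutes_id by blast

lemma card_perms_fixing:
  assumes "c < N"
  shows "card {\<sigma>\<in>perms N. \<sigma> c = c} = fact (N - 1)"
proof -
  have "{\<sigma>\<in>perms N. \<sigma> c = c} = {\<sigma>. \<sigma> permutes ({0..<N} - {c})}"
    by (auto simp: perms_def permutes_not_in intro: permutes_superset permutes_subset)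
  also have "card \<dots> = fact (N - 1)"
    by (rule card_permutations) (use assms in auto)
  finally show ?thesis .
qed

lemma prob_uniform_A_set_le:
  assumes "1 \<le> n" "0 < K"
  shows "measure_pmf.prob (pmf_of_set (perms (2*n))) (A_set n K) \<le> 1 / (2 * K)"
proof -
  define P where "P = perms (2*n)"
  define F where "F \<sigma> = real (card {c\<in>{0..<n}. \<sigma> c = c})" for \<sigma> :: "nat \<Rightarrow> nat"
  have F_sum: "F \<sigma> = (\<Sum>c<n. of_bool (\<sigma> c = c))" for \<sigma>
    by (simp add: F_def Int_def)
  have fixing: "(\<Sum>\<sigma>\<in>P. of_bool (\<sigma> c = c)) = real (fact (2*n - 1))" if "c < n" for c
    using that card_perms_fixing[of c "2*n"] finite_perms
    by (simp add: P_def Int_def)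
  have "real (card (P \<inter> A_set n K)) * K = (\<Sum>\<sigma>\<in>P \<inter> A_set n K. K)" by simp
  also have "\<dots> \<le> (\<Sum>\<sigma>\<in>P \<inter> A_set n K. F \<sigma>)"
    by (intro sum_mono) (auto simp: A_set_def F_def)
  also have "\<dots> \<le> (\<Sum>\<sigma>\<in>P. F \<sigma>)"
    using finite_perms by (intro sum_mono2) (auto simp: F_def P_def)
  also have "\<dots> = (\<Sum>c<n. \<Sum>\<sigma>\<in>P. of_bool (\<sigma> c = c))"
    unfolding F_sum by (rule sum.swap)
  also have "\<dots> = (\<Sum>c<n. real (fact (2*n - 1)))"
    by (intro sum.cong refl fixing) simp
  also have "\<dots> = real n * fact (2*n - 1)"
    by simp
  finally have "real (card (P \<inter> A_set n K)) * K \<le> real n * fact (2*n - 1)" .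
  moreover have "(fact (2*n) :: real) = real (2*n) * fact (2*n - 1)"
    using assms by (simp add: fact_reduce)
  ultimately show ?thesis
    using assms finite_perms perms_ne_empty
    by (simp add: P_def measure_pmf_of_set card_perms field_simps)
qed

lemma prob_uniform_A_set_tendsto:
  assumes "0 < \<epsilon>"
  shows "(\<lambda>n. measure_pmf.prob (pmf_of_set (perms (2*n))) (A_set n (real (2*n) powr (\<epsilon>/2))))
           \<longlonglongrightarrow> 0"
proof (rule tendsto_sandwich[of "\<lambda>_. 0" _ _ "\<lambda>n. 1 / (2 * real (2*n) powr (\<epsilon>/2))"])
  show "eventually (\<lambda>n. measure_pmf.prob (pmf_of_set (perms (2*n)))
      (A_set n (real (2*n) powr (\<epsilon>/2))) \<le> 1 / (2 * real (2*n) powr (\<epsilon>/2))) sequentially"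
    using eventually_ge_at_top[of 1] by eventually_elim (simp add: prob_uniform_A_set_le)
  show "(\<lambda>n. 1 / (2 * real (2*n) powr (\<epsilon>/2))) \<longlonglongrightarrow> 0" using assms by real_asymp
qed auto


subsection \<open>Total variation to the uniform distribution\<close>

lemma tv_to_uniform_eq:
  "tv_to_uniform n a t = (1/2) * (\<Sum>\<sigma>\<in>perms (2*n).
      \<bar>pmf (walk n a t) \<sigma> - pmf (pmf_of_set (perms (2*n))) \<sigma>\<bar>)"
  using finite_perms perms_ne_empty card_perms[of "2*n"]
  by (auto simp: tv_to_uniform_def intro!: sum.cong arg_cong[where f = "\<lambda>x. _ * x"])

lemma tv_to_uniform_bounds:
  assumes "0 \<le> a" "a \<le> 2" "1 \<le> n"
  shows "measure_pmf.prob (walk n a t) A - measure_pmf.prob (pmf_of_set (perms (2*n))) A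
           \<le> tv_to_uniform n a t"
    and "tv_to_uniform n a t \<le> 1"
proof -
  have "set_pmf (walk n a t) \<subseteq> perms (2*n)"
    using walk_permutes[OF assms] by (auto simp: perms_def)
  then show "measure_pmf.prob (walk n a t) A - measure_pmf.prob (pmf_of_set (perms (2*n))) A
           \<le> tv_to_uniform n a t"
    unfolding tv_to_uniform_eq using finite_perms perms_ne_empty
    by (intro prob_diff_le_total_variation) auto
  show "tv_to_uniform n a t \<le> 1"
    unfolding tv_to_uniform_eq by (intro total_variation_le_one finite_perms)
qed


theorem mainTheorem2:
  fixes a \<epsilon> :: real
  assumes "0 < a" "a \<le> 1" "0 < \<epsilon>" "\<epsilon> < 1"
  shows "(\<lambda>n. tv_to_uniform n a (tN a \<epsilon> (2*n))) \<longlonglongrightarrow> 1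
       \<and> (\<lambda>n. measure_pmf.prob (walk n a (tN a \<epsilon> (2*n)))
                 (A_set n (real (2*n) powr (\<epsilon>/2)))) \<longlonglongrightarrow> 1
       \<and> (\<lambda>n. measure_pmf.prob (pmf_of_set (perms (2*n)))
                 (A_set n (real (2*n) powr (\<epsilon>/2)))) \<longlonglongrightarrow> 0"
proof -
  let ?A = "\<lambda>n. A_set n (real (2*n) powr (\<epsilon>/2))"
  let ?W = "\<lambda>n. measure_pmf.prob (walk n a (tN a \<epsilon> (2*n))) (?A n)"
  let ?U = "\<lambda>n. measure_pmf.prob (pmf_of_set (perms (2*n))) (?A n)"
  have W: "?W \<longlonglongrightarrow> 1" using prob_walk_A_set_tendsto assms by blast
  have U: "?U \<longlonglongrightarrow> 0" using prob_uniform_A_set_tendsto assms by blast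
  have "(\<lambda>n. tv_to_uniform n a (tN a \<epsilon> (2*n))) \<longlonglongrightarrow> 1"
  proof (rule tendsto_sandwich)
    show "(\<lambda>n. ?W n - ?U n) \<longlonglongrightarrow> 1" using tendsto_diff[OF W U] by simp
    show "eventually (\<lambda>n. ?W n - ?U n \<le> tv_to_uniform n a (tN a \<epsilon> (2*n))) sequentially"
      using eventually_ge_at_top[of 1] by eventually_elim (use assms tv_to_uniform_bounds in auto)
    show "eventually (\<lambda>n. tv_to_uniform n a (tN a \<epsilon> (2*n)) \<le> 1) sequentially"
      using eventually_ge_at_top[of 1] by eventually_elim (use assms tv_to_uniform_bounds in auto)
  qed simp
  with W U show ?thesis by blast
qed

end
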